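(* Let $\mathcal{A}$ be a hyperplane arrangement in $\mathbb{P}^3(\mathbb{R})$ consisting of $n$ hyperplanes. Write $h:=\sum_{i \geq 2} (i-1) h^\mathcal{A}_i$ and $g^\mathcal{A}_1:=\sum_{i \geq 2} h^\mathcal{A}_i$. Then: (i) The characteristic polynomial of $\mathcal{A}$ is $$\chi(\mathcal{A},t)=(t-1)\left( t^3+(1-n)t^2+(h+1-n)t+ h + 1 -f^\mathcal{A}_3 \right).$$ (ii) All roots of $\chi(\mathcal{A},t)$ are real if and only if the following three relations hold: $$h=\sum_{i \geq 2} (i-1) h^\mathcal{A}_i= \sum_{H \in \mathcal{A}} |\mathcal{A}^H| -g^\mathcal{A}_1\leq \left \lfloor \frac{(n+2)(n-1)}{3} \right \rfloor , \tag{1}$$ $$f^\mathcal{A}_3 \leq \left \lfloor\frac{(9n+18)h + 20 + 12n + 2 \sqrt{(n^2+n-2-3h )^3}-2n^3-3n^2 }{27} \right \rfloor, \tag{2}$$ $$f^\mathcal{A}_3 \geq \left \lceil \frac{(9n+18)h + 20 + 12n - 2 \sqrt{(n^2+n-2-3h )^3}-2n^3-3n^2 }{27} \right \rceil. \tag{3}$$ Moreover, the estimates (1), (2), (3) are tight: there exists an arrangement in $\mathbb{P}^3(\mathbb{R})$ for which equality holds in each of (1), (2) and (3).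
   Context: An arrangement in $\mathbb{P}^3=\mathbb{P}^3(\mathbb{R})$ is a finite set $\mathcal{A}$ of projective hyperplanes (images of linear hyperplanes of $\mathbb{R}^4$) with empty common intersection; $n=|\mathcal{A}|$. $\mathcal{A}$ induces a cell decomposition of $\mathbb{P}^3$; $f^\mathcal{A}_i$ is the number of its $i$-dimensional cells, so $f^\mathcal{A}_3$ is the number of chambers. The intersection lattice $L$ consists of all subspaces of $\mathbb{R}^4$ that are intersections of the corresponding linear hyperplanes, ordered by reverse inclusion, with Möbius function $\mu$; the characteristic polynomial is $\chi(\mathcal{A},t)=\sum_{X\in L}\mu(\mathbb{R}^4,X)t^{\dim X}$. A line of $\mathcal{A}$ is an element of $L$ of dimension $2$; its weight is the number of hyperplanes of $\mathcal{A}$ containing it, and $h^\mathcal{A}_i$ denotes the number of lines of weight $i$ ($i\ge 2$). For $H\in\mathcal{A}$, the restriction $\mathcal{A}^H$ is the arrangement in $\mathbb{P}^2$ formed by the codimension-two elements of $L$ contained in $H$, and $|\mathcal{A}^H|$ is its number of lines. *)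

theory Defs
  imports "HOL-Analysis.Analysis" "HOL-Computational_Algebra.Polynomial"
begin

text \<open>A (central, essential) arrangement in P^3(R), represented by the corresponding
  linear hyperplanes of R^4.  The condition that the projective hyperplanes have empty
  common intersection is that the linear hyperplanes intersect in the origin only.\<close>
definition is_arrangement :: "(real^4) set set \<Rightarrow> bool" where
  "is_arrangement A \<longleftrightarrow> finite A \<and>
     (\<forall>H\<in>A. \<exists>a::real^4. a \<noteq> 0 \<and> H = {x. a \<bullet> x = 0}) \<and> \<Inter>A = {0}"

definition int_lattice :: "(real^4) set set \<Rightarrow> (real^4) set set" where
  "int_lattice A = {\<Inter>B | B. B \<subseteq> A}"

text \<open>Moebius function mu(V, X) of a finite family L ordered by reverse inclusion, with
  bottom element V: mu(V,V) = 1 and mu(V,X) = - sum over V <= Y < X of mu(V,Y), i.e.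
  over Y in L with X strictly contained in Y (and Y contained in V); zero outside L.\<close>
definition mobius_from :: "'a set set \<Rightarrow> 'a set \<Rightarrow> 'a set \<Rightarrow> int" where
  "mobius_from L V = (THE m. (\<forall>X. X \<notin> L \<longrightarrow> m X = 0) \<and>
      (\<forall>X\<in>L. m X = (if X = V then 1
                       else - (\<Sum>Y\<in>{Y\<in>L. X \<subset> Y \<and> Y \<subseteq> V}. m Y))))"

definition char_poly :: "(real^4) set set \<Rightarrow> real poly" where
  "char_poly A = (\<Sum>X\<in>int_lattice A.
      monom (of_int (mobius_from (int_lattice A) UNIV X)) (dim X))"

text \<open>Lines of the arrangement: elements of L of (linear) dimension 2.\<close>
definition lines :: "(real^4) set set \<Rightarrow> (real^4) set set" where
  "lines A = {X\<in>int_lattice A. dim X = 2}"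

definition weight :: "(real^4) set set \<Rightarrow> (real^4) set \<Rightarrow> nat" where
  "weight A X = card {H\<in>A. X \<subseteq> H}"

definition h_count :: "(real^4) set set \<Rightarrow> nat \<Rightarrow> nat" where
  "h_count A i = card {X\<in>lines A. weight A X = i}"

definition restr_card :: "(real^4) set set \<Rightarrow> (real^4) set \<Rightarrow> nat" where
  "restr_card A H = card {X\<in>lines A. X \<subseteq> H}"

text \<open>Chambers of the projective arrangement: each is the image in P^3 of a pair of
  antipodal connected components of the complement of the union of the linear hyperplanes
  in R^4; we represent it by the union of that antipodal pair (its cone in R^4 minus 0).\<close>
definition chambers :: "(real^4) set set \<Rightarrow> (real^4) set set" where
  "chambers A = (\<lambda>C. C \<union> uminus ` C) ` components (- \<Union>A)"

definition f3 :: "(real^4) set set \<Rightarrow> nat" where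
  "f3 A = card (chambers A)"

end

(* Whitney's formula chi(t) = sum over subsets B of A of (-1)^|B| t^(dim of the intersection of B)
   gives 1, -n and h as the coefficients of t^4, t^3 and t^2, the Moebius function being -1 on
   hyperplanes and (weight - 1) on lines.  Moreover chi(1) = 0, and chi(-1) = 2 f_3 by Zaslavsky's
   theorem, which follows from deletion-restriction for sign vectors.  These five linear conditions
   determine the quartic, which is (i).  After removing the factor t - 1, the cubic
   t^3 + b t^2 + c t + d has only real roots iff its discriminant is nonnegative; for our cubic
   27 times the discriminant is 4 D^3 - u^2 with D = n^2 + n - 2 - 3h and
   u = (9n + 18) h + 20 + 12n - 2n^3 - 3n^2 - 27 f_3, so real-rootedness means D >= 0 and
   |u| <= 2 sqrt (D^3), which is (1)-(3).  The four coordinate hyperplanes, with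
   chi(t) = (t - 1)^4, have D = 0 and attain all three bounds. *)

theory Submission
  imports Defs
begin

section \<open>Sign vectors and Zaslavsky's theorem\<close>

definition sign_vector :: "('i \<Rightarrow> 'a::real_inner) \<Rightarrow> 'i set \<Rightarrow> 'a \<Rightarrow> 'i \<Rightarrow> real" where
  "sign_vector a F x = (\<lambda>K. if K \<in> F then sgn (a K \<bullet> x) else 0)"

definition region_signs :: "('i \<Rightarrow> 'a::real_inner) \<Rightarrow> 'i set \<Rightarrow> 'a set \<Rightarrow> ('i \<Rightarrow> real) set" where
  "region_signs a F S = sign_vector a F ` {x\<in>S. \<forall>K\<in>F. a K \<bullet> x \<noteq> 0}"

text \<open>The open region containing \<open>x\<close> if \<open>x\<close> lies on none of the hyperplanes, and empty
  otherwise.\<close>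

definition sign_cell :: "('i \<Rightarrow> 'a::real_inner) \<Rightarrow> 'i set \<Rightarrow> 'a \<Rightarrow> 'a set" where
  "sign_cell a F x = {y. \<forall>K\<in>F. 0 < sgn (a K \<bullet> x) * (a K \<bullet> y)}"

lemma finite_region_signs: "finite F \<Longrightarrow> finite (region_signs a F S)"
proof -
  assume "finite F"
  then have "finite {\<sigma>. \<forall>K. (K \<in> F \<longrightarrow> \<sigma> K \<in> {-1, 0, 1::real}) \<and> (K \<notin> F \<longrightarrow> \<sigma> K = 0)}"
    by (intro finite_set_of_finite_funs) auto
  moreover have "region_signs a F S \<subseteq> {\<sigma>. \<forall>K. (K \<in> F \<longrightarrow> \<sigma> K \<in> {-1, 0, 1}) \<and> (K \<notin> F \<longrightarrow> \<sigma> K = 0)}"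
    by (auto simp: region_signs_def sign_vector_def sgn_if split: if_splits)
  ultimately show ?thesis
    by (rule finite_subset[rotated])
qed

lemma sign_vector_uminus: "sign_vector a F (- x) = - sign_vector a F x"
  by (auto simp: sign_vector_def sgn_minus)

lemma sign_vector_insert: "sign_vector a (insert i F) x = (sign_vector a F x)(i := sgn (a i \<bullet> x))"
  by (auto simp: sign_vector_def)

lemma sign_vector_eq_iff:
  "sign_vector a F y = sign_vector a F x \<longleftrightarrow> (\<forall>K\<in>F. sgn (a K \<bullet> y) = sgn (a K \<bullet> x))"
  by (auto simp: sign_vector_def fun_eq_iff)

lemma mem_sign_cell_iff:
  assumes "\<forall>K\<in>F. a K \<bullet> x \<noteq> 0"
  shows "y \<in> sign_cell a F x \<longleftrightarrow> (\<forall>K\<in>F. a K \<bullet> y \<noteq> 0) \<and> sign_vector a F y = sign_vector a F x"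
  using assms unfolding sign_cell_def sign_vector_eq_iff
  by (force simp: sgn_if zero_less_mult_iff)

lemma sign_cell_eq_Inter_halfspaces:
  "sign_cell a F x = (\<Inter>K\<in>F. {y. (sgn (a K \<bullet> x) *\<^sub>R a K) \<bullet> y > 0})"
  by (auto simp: sign_cell_def)

lemma open_sign_cell: "finite F \<Longrightarrow> open (sign_cell a F x)"
  unfolding sign_cell_eq_Inter_halfspaces by (intro open_INT ballI open_halfspace_gt)

lemma convex_sign_cell: "convex (sign_cell a F x)"
  unfolding sign_cell_eq_Inter_halfspaces by (intro convex_INT convex_halfspace_gt)

lemma sign_cell_uminus: "sign_cell a F (- x) = uminus ` sign_cell a F x"
proof -
  have "sign_cell a F (- x) = {y. - y \<in> sign_cell a F x}"
    by (simp add: sign_cell_def sgn_minus)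
  then show ?thesis
    by (auto intro: rev_image_eqI)
qed

lemma sign_cell_eq_iff:
  assumes "\<forall>K\<in>F. a K \<bullet> x \<noteq> 0" "\<forall>K\<in>F. a K \<bullet> y \<noteq> 0"
  shows "sign_cell a F x = sign_cell a F y \<longleftrightarrow> sign_vector a F x = sign_vector a F y"
  using assms by (auto simp: set_eq_iff mem_sign_cell_iff)

lemma connected_component_eq_sign_cell:
  fixes a :: "'i \<Rightarrow> 'a::euclidean_space"
  assumes x: "\<forall>K\<in>F. a K \<bullet> x \<noteq> 0"
  shows "connected_component_set {y. \<forall>K\<in>F. a K \<bullet> y \<noteq> 0} x = sign_cell a F x"
    (is "connected_component_set ?S x = _")
proof
  show "sign_cell a F x \<subseteq> connected_component_set ?S x"
    using x by (intro connected_component_maximal convex_connected convex_sign_cell)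
      (auto simp: mem_sign_cell_iff)
  show "connected_component_set ?S x \<subseteq> sign_cell a F x"
  proof
    fix y assume y: "y \<in> connected_component_set ?S x"
    let ?C = "connected_component_set ?S x"
    have "sgn (a K \<bullet> y) = sgn (a K \<bullet> x)" if K: "K \<in> F" for K
    proof (rule ccontr)
      assume "sgn (a K \<bullet> y) \<noteq> sgn (a K \<bullet> x)"
      then have "(x \<bullet> a K \<le> 0 \<and> 0 \<le> y \<bullet> a K) \<or> (y \<bullet> a K \<le> 0 \<and> 0 \<le> x \<bullet> a K)"
        by (auto simp: sgn_if inner_commute split: if_splits)
      moreover have "x \<in> ?C"
        using x by (simp add: connected_component_refl)
      ultimately obtain z where "z \<in> ?C" "z \<bullet> a K = 0"
        using connected_ivt_component[of ?C x y "a K" 0] connected_ivt_component[of ?C y x "a K" 0] y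
        by auto
      then show False
        using connected_component_subset[of ?S x] K by (auto simp: inner_commute)
    qed
    then show "y \<in> sign_cell a F x"
      using x y connected_component_subset[of ?S x] by (auto simp: mem_sign_cell_iff sign_vector_eq_iff)
  qed
qed

lemma sign_cell_contains_segment:
  assumes "finite F" "\<forall>K\<in>F. a K \<bullet> x \<noteq> 0"
  shows "\<exists>e>0. x + e *\<^sub>R v \<in> sign_cell a F x \<and> x - e *\<^sub>R v \<in> sign_cell a F x"
proof -
  have "x \<in> sign_cell a F x"
    using assms(2) by (simp add: mem_sign_cell_iff)
  then obtain r where r: "r > 0" "ball x r \<subseteq> sign_cell a F x"
    using open_sign_cell[OF assms(1)] open_contains_ball by blast
  define e where "e = r / (norm v + 1)"
  have "0 < norm v + 1"
    by (simp add: add_nonneg_pos)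
  then have "e > 0" "e * norm v < r"
    using r(1) by (auto simp: e_def field_simps)
  then have "x + e *\<^sub>R v \<in> ball x r" "x - e *\<^sub>R v \<in> ball x r"
    by (auto simp: dist_norm)
  then show ?thesis
    using r(2) \<open>e > 0\<close> by blast
qed

lemma card_region_signs_insert:
  assumes F: "finite F" and i: "i \<notin> F"
  shows "card (region_signs a (insert i F) S)
    = card (region_signs a F (S \<inter> {x. 0 < a i \<bullet> x})) + card (region_signs a F (S \<inter> {x. a i \<bullet> x < 0}))"
proof -
  let ?P = "region_signs a F (S \<inter> {x. 0 < a i \<bullet> x})"
  let ?M = "region_signs a F (S \<inter> {x. a i \<bullet> x < 0})"
  have split: "region_signs a (insert i F) S = (\<lambda>\<sigma>. \<sigma>(i := 1)) ` ?P \<union> (\<lambda>\<sigma>. \<sigma>(i := -1)) ` ?M"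
  proof -
    have parts: "{x\<in>S. \<forall>K\<in>insert i F. a K \<bullet> x \<noteq> 0}
      = {x\<in>S \<inter> {x. 0 < a i \<bullet> x}. \<forall>K\<in>F. a K \<bullet> x \<noteq> 0} \<union> {x\<in>S \<inter> {x. a i \<bullet> x < 0}. \<forall>K\<in>F. a K \<bullet> x \<noteq> 0}"
      by (auto simp: linorder_neq_iff)
    show ?thesis
      unfolding region_signs_def sign_vector_insert image_image parts image_Un
      by (intro arg_cong2[where f = "(\<union>)"] image_cong) auto
  qed
  have vanish: "\<sigma> i = 0" if "\<sigma> \<in> region_signs a F T" for \<sigma> T
    using that i by (auto simp: region_signs_def sign_vector_def)
  have inj: "inj_on (\<lambda>\<sigma>. \<sigma>(i := c)) (region_signs a F T)" for c T
    by (rule inj_onI) (metis fun_upd_idem_iff fun_upd_upd vanish)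
  have "card (region_signs a (insert i F) S)
      = card ((\<lambda>\<sigma>. \<sigma>(i := 1)) ` ?P) + card ((\<lambda>\<sigma>. \<sigma>(i := -1)) ` ?M)"
    unfolding split using F
    by (intro card_Un_disjoint) (auto simp: finite_region_signs dest: fun_cong[where x = i])
  then show ?thesis
    by (simp add: card_image inj)
qed

lemma region_signs_halfspaces_Un:
  assumes V: "subspace V" and F: "finite F" and v: "v \<in> V" "0 < a i \<bullet> v"
  shows "region_signs a F (V \<inter> {x. 0 < a i \<bullet> x}) \<union> region_signs a F (V \<inter> {x. a i \<bullet> x < 0})
    = region_signs a F V"
proof
  show "region_signs a F V
    \<subseteq> region_signs a F (V \<inter> {x. 0 < a i \<bullet> x}) \<union> region_signs a F (V \<inter> {x. a i \<bullet> x < 0})"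
  proof
    fix \<sigma> assume "\<sigma> \<in> region_signs a F V"
    then obtain x where x: "x \<in> V" "\<forall>K\<in>F. a K \<bullet> x \<noteq> 0" "\<sigma> = sign_vector a F x"
      by (auto simp: region_signs_def)
    show "\<sigma> \<in> region_signs a F (V \<inter> {x. 0 < a i \<bullet> x}) \<union> region_signs a F (V \<inter> {x. a i \<bullet> x < 0})"
    proof (cases "a i \<bullet> x < 0")
      case True
      then show ?thesis
        using x by (auto simp: region_signs_def)
    next
      case False
      obtain e where e: "e > 0" "x + e *\<^sub>R v \<in> sign_cell a F x"
        using sign_cell_contains_segment[OF F x(2)] by blast
      have "x + e *\<^sub>R v \<in> V"
        using V v x(1) by (simp add: subspace_add subspace_scale)
      moreover have "0 < a i \<bullet> (x + e *\<^sub>R v)"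
        using False mult_pos_pos[OF e(1) v(2)] by (simp add: inner_add_right)
      ultimately show ?thesis
        using e(2) x
        by (auto simp: region_signs_def mem_sign_cell_iff intro!: image_eqI[of _ _ "x + e *\<^sub>R v"])
    qed
  qed
qed (auto simp: region_signs_def)

lemma region_signs_hyperplane_subset_halfspaces:
  assumes V: "subspace V" and F: "finite F" and v: "v \<in> V" "0 < a i \<bullet> v"
  shows "region_signs a F (V \<inter> {x. a i \<bullet> x = 0})
    \<subseteq> region_signs a F (V \<inter> {x. 0 < a i \<bullet> x}) \<inter> region_signs a F (V \<inter> {x. a i \<bullet> x < 0})"
proof
  fix \<sigma> assume "\<sigma> \<in> region_signs a F (V \<inter> {x. a i \<bullet> x = 0})"
  then obtain x where x: "x \<in> V" "a i \<bullet> x = 0" "\<forall>K\<in>F. a K \<bullet> x \<noteq> 0" "\<sigma> = sign_vector a F x"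
    by (auto simp: region_signs_def)
  obtain e where e: "e > 0" "x + e *\<^sub>R v \<in> sign_cell a F x" "x - e *\<^sub>R v \<in> sign_cell a F x"
    using sign_cell_contains_segment[OF F x(3)] by blast
  have "x + e *\<^sub>R v \<in> V" "x - e *\<^sub>R v \<in> V"
    using V v x(1) by (simp_all add: subspace_add subspace_diff subspace_scale)
  moreover have "0 < a i \<bullet> (x + e *\<^sub>R v)" "a i \<bullet> (x - e *\<^sub>R v) < 0"
    using x(2) e(1) v(2) by (simp_all add: inner_add_right inner_diff_right)
  moreover have "\<forall>K\<in>F. a K \<bullet> (x + e *\<^sub>R v) \<noteq> 0" "sign_vector a F (x + e *\<^sub>R v) = \<sigma>"
    "\<forall>K\<in>F. a K \<bullet> (x - e *\<^sub>R v) \<noteq> 0" "sign_vector a F (x - e *\<^sub>R v) = \<sigma>"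
    using e(2,3) x(3,4) by (simp_all add: mem_sign_cell_iff)
  ultimately show
    "\<sigma> \<in> region_signs a F (V \<inter> {x. 0 < a i \<bullet> x}) \<inter> region_signs a F (V \<inter> {x. a i \<bullet> x < 0})"
    unfolding region_signs_def
    by (intro IntI rev_image_eqI[of "x + e *\<^sub>R v"] rev_image_eqI[of "x - e *\<^sub>R v"]) auto
qed

lemma region_signs_halfspaces_Int_subset:
  assumes V: "subspace V"
  shows "region_signs a F (V \<inter> {x. 0 < a i \<bullet> x}) \<inter> region_signs a F (V \<inter> {x. a i \<bullet> x < 0})
    \<subseteq> region_signs a F (V \<inter> {x. a i \<bullet> x = 0})"
proof
  fix \<sigma>
  assume "\<sigma> \<in> region_signs a F (V \<inter> {x. 0 < a i \<bullet> x}) \<inter> region_signs a F (V \<inter> {x. a i \<bullet> x < 0})"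
  then obtain x y where x: "x \<in> V" "0 < a i \<bullet> x" "\<forall>K\<in>F. a K \<bullet> x \<noteq> 0" "\<sigma> = sign_vector a F x"
    and y: "y \<in> V" "a i \<bullet> y < 0" "\<forall>K\<in>F. a K \<bullet> y \<noteq> 0" "\<sigma> = sign_vector a F y"
    by (auto simp: region_signs_def)
  define p q where "p = a i \<bullet> x" and "q = - (a i \<bullet> y)"
  have pq: "0 < p" "0 < q"
    using x(2) y(2) by (auto simp: p_def q_def)
  \<comment> \<open>the point where the segment from x to y crosses the hyperplane of i\<close>
  define z where "z = (q / (p + q)) *\<^sub>R x + (p / (p + q)) *\<^sub>R y"
  have "x \<in> sign_cell a F x" "y \<in> sign_cell a F x"
    using x y by (simp_all add: mem_sign_cell_iff)
  moreover have "q / (p + q) + p / (p + q) = 1"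
    using pq by (simp add: add_divide_distrib[symmetric])
  ultimately have "z \<in> sign_cell a F x"
    unfolding z_def using pq by (intro convexD[OF convex_sign_cell]) auto
  moreover have "z \<in> V"
    unfolding z_def using V x(1) y(1) by (intro subspace_add subspace_scale)
  moreover have "a i \<bullet> z = 0"
  proof -
    have "a i \<bullet> z = q / (p + q) * p + p / (p + q) * (- q)"
      unfolding z_def p_def q_def by (simp only: inner_add_right inner_scaleR_right)
    then show ?thesis
      by (simp add: algebra_simps)
  qed
  ultimately show "\<sigma> \<in> region_signs a F (V \<inter> {x. a i \<bullet> x = 0})"
    using x unfolding region_signs_def mem_sign_cell_iff[OF x(3)]
    by (intro rev_image_eqI[of z]) auto
qed

lemma region_signs_halfspaces_Int:
  assumes V: "subspace V" and F: "finite F" and v: "v \<in> V" "0 < a i \<bullet> v"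
  shows "region_signs a F (V \<inter> {x. 0 < a i \<bullet> x}) \<inter> region_signs a F (V \<inter> {x. a i \<bullet> x < 0})
    = region_signs a F (V \<inter> {x. a i \<bullet> x = 0})"
  using region_signs_halfspaces_Int_subset[OF V]
    region_signs_hyperplane_subset_halfspaces[where a = a and i = i, OF V F v]
  by (rule equalityI)

lemma card_region_signs_deletion_restriction:
  assumes V: "subspace V" and F: "finite F" "i \<notin> F" and v: "v \<in> V" "a i \<bullet> v \<noteq> 0"
  shows "card (region_signs a (insert i F) V)
    = card (region_signs a F V) + card (region_signs a F (V \<inter> {x. a i \<bullet> x = 0}))"
proof -
  obtain w where w: "w \<in> V" "0 < a i \<bullet> w"
  proof (cases "0 < a i \<bullet> v")
    case False
    then show ?thesis
      using that[of "- v"] V v by (simp add: subspace_neg)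
  qed (use v in auto)
  have fin: "finite (region_signs a F (V \<inter> {x. 0 < a i \<bullet> x}))"
    "finite (region_signs a F (V \<inter> {x. a i \<bullet> x < 0}))"
    using F by (simp_all add: finite_region_signs)
  show ?thesis
    unfolding card_region_signs_insert[OF F] card_Un_Int[OF fin]
      region_signs_halfspaces_Un[where a = a and i = i, OF V F(1) w]
      region_signs_halfspaces_Int[where a = a and i = i, OF V F(1) w] ..
qed

lemma card_region_signs_halfspace:
  assumes F: "finite F" and i: "i \<in> F"
  shows "card (region_signs a F UNIV) = 2 * card (region_signs a F {x. 0 < a i \<bullet> x})"
proof -
  let ?P = "region_signs a F {x. 0 < a i \<bullet> x}"
  have pos: "\<sigma> i = 1" if "\<sigma> \<in> ?P" for \<sigma>
    using that i by (auto simp: region_signs_def sign_vector_def)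
  have "region_signs a F UNIV = ?P \<union> uminus ` ?P"
  proof (intro equalityI subsetI)
    fix \<sigma> assume "\<sigma> \<in> region_signs a F UNIV"
    then obtain x where x: "\<forall>K\<in>F. a K \<bullet> x \<noteq> 0" "\<sigma> = sign_vector a F x"
      by (auto simp: region_signs_def)
    show "\<sigma> \<in> ?P \<union> uminus ` ?P"
    proof (cases "0 < a i \<bullet> x")
      case True
      then show ?thesis
        using x by (auto simp: region_signs_def)
    next
      case False
      then have "0 < a i \<bullet> (- x)"
        using x i by (simp add: order_neq_le_trans)
      then have "sign_vector a F (- x) \<in> ?P"
        using x by (auto simp: region_signs_def)
      moreover have "\<sigma> = - sign_vector a F (- x)"
        using x by (simp add: sign_vector_uminus fun_eq_iff)
      ultimately show ?thesis
        by blast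
    qed
  next
    fix \<sigma> assume "\<sigma> \<in> ?P \<union> uminus ` ?P"
    then show "\<sigma> \<in> region_signs a F UNIV"
      by (auto simp: region_signs_def simp flip: sign_vector_uminus)
  qed
  moreover have "?P \<inter> uminus ` ?P = {}"
    using pos by (force dest: pos)
  moreover have "card (uminus ` ?P) = card ?P"
    by (simp add: card_image inj_on_def fun_eq_iff)
  ultimately show ?thesis
    using finite_region_signs[OF F, of a "{x. 0 < a i \<bullet> x}"] by (simp add: card_Un_disjoint)
qed

lemma sum_Pow_insert:
  assumes "finite F" "i \<notin> F"
  shows "(\<Sum>B\<in>Pow (insert i F). f B) = (\<Sum>B\<in>Pow F. f B) + (\<Sum>B\<in>Pow F. f (insert i B))"
proof -
  have "inj_on (insert i) (Pow F)"
    using assms(2) by (intro inj_onI) (metis PowD insert_ident subset_iff)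
  then show ?thesis
    unfolding Pow_insert using assms
    by (subst sum.union_disjoint) (auto simp: sum.reindex)
qed

lemma dim_Int_hyperplane:
  fixes b :: "'a::euclidean_space"
  assumes V: "subspace V" and v: "v \<in> V" "b \<bullet> v \<noteq> 0"
  shows "dim (V \<inter> {x. b \<bullet> x = 0}) + 1 = dim V"
proof -
  have "subspace (V \<inter> {x. b \<bullet> x = 0})"
    using V by (simp add: subspace_inter subspace_hyperplane)
  moreover have "0 \<in> V \<inter> {x. b \<bullet> x = 0}" "\<not> V \<subseteq> {x. b \<bullet> x = 0}"
    using V v by (auto simp: subspace_0)
  ultimately have "int (dim (V \<inter> {x. b \<bullet> x = 0})) = int (dim V) - 1"
    using aff_dim_affine_Int_hyperplane[of V b 0] V
    by (auto simp: aff_dim_subspace subspace_imp_affine)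
  then show ?thesis
    by linarith
qed

text \<open>For \<open>V = UNIV\<close> this is the characteristic polynomial of the hyperplanes
  \<open>{x. a K \<bullet> x = 0}\<close> evaluated at \<open>-1\<close>, by Whitney's formula.\<close>

definition alternating_flat_sum :: "('i \<Rightarrow> 'a::euclidean_space) \<Rightarrow> 'i set \<Rightarrow> 'a set \<Rightarrow> int" where
  "alternating_flat_sum a F V = (\<Sum>B\<in>Pow F. (-1) ^ (card B + dim (V \<inter> {x. \<forall>K\<in>B. a K \<bullet> x = 0})))"

lemma alternating_flat_sum_insert:
  assumes F: "finite F" "i \<notin> F"
  shows "alternating_flat_sum a (insert i F) V
    = alternating_flat_sum a F V - alternating_flat_sum a F (V \<inter> {x. a i \<bullet> x = 0})"
proof -
  have "(-1::int) ^ (card (insert i B) + dim (V \<inter> {x. \<forall>K\<in>insert i B. a K \<bullet> x = 0}))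
      = - ((-1) ^ (card B + dim ((V \<inter> {x. a i \<bullet> x = 0}) \<inter> {x. \<forall>K\<in>B. a K \<bullet> x = 0})))"
    if "B \<in> Pow F" for B
  proof -
    have "finite B" "i \<notin> B"
      using that F by (auto intro: finite_subset)
    then have "card (insert i B) = Suc (card B)"
      by simp
    moreover have "V \<inter> {x. \<forall>K\<in>insert i B. a K \<bullet> x = 0} = (V \<inter> {x. a i \<bullet> x = 0}) \<inter> {x. \<forall>K\<in>B. a K \<bullet> x = 0}"
      by auto
    ultimately show ?thesis
      by simp
  qed
  then show ?thesis
    unfolding alternating_flat_sum_def sum_Pow_insert[OF F] by (simp add: sum_negf)
qed

text \<open>Zaslavsky's count of the regions of a central arrangement, in its sign vector form:
  deletion and restriction satisfy the same recursion on both sides.\<close>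

theorem card_region_signs:
  fixes a :: "'i \<Rightarrow> 'a::euclidean_space"
  assumes "finite F" "subspace V"
  shows "int (card (region_signs a F V)) = (-1) ^ dim V * alternating_flat_sum a F V"
  using assms
proof (induction F arbitrary: V rule: finite_induct)
  case empty
  have "region_signs a {} V = {sign_vector a {} 0}"
    using subspace_0[OF empty.prems] by (auto simp: region_signs_def sign_vector_def)
  then show ?case
    by (simp add: alternating_flat_sum_def flip: power_add)
next
  case (insert i F)
  let ?H = "V \<inter> {x. a i \<bullet> x = 0}"
  show ?case
  proof (cases "\<exists>v\<in>V. a i \<bullet> v \<noteq> 0")
    case True
    then obtain v where v: "v \<in> V" "a i \<bullet> v \<noteq> 0"
      by blast
    have H: "subspace ?H"
      using insert.prems by (simp add: subspace_inter subspace_hyperplane)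
    have "(-1::int) ^ dim V = - ((-1) ^ dim ?H)"
      using dim_Int_hyperplane[OF insert.prems v] by (metis power_Suc Suc_eq_plus1 mult_minus1)
    then show ?thesis
      using insert.IH[OF insert.prems] insert.IH[OF H]
      unfolding card_region_signs_deletion_restriction[where a = a, OF insert.prems insert.hyps v]
        alternating_flat_sum_insert[OF insert.hyps]
      by (simp add: algebra_simps)
  next
    case False
    then have "region_signs a (insert i F) V = {}" "?H = V"
      by (auto simp: region_signs_def)
    then show ?thesis
      by (simp add: alternating_flat_sum_insert[OF insert.hyps])
  qed
qed

section \<open>The Moebius function of an intersection lattice\<close>

lemma sum_Pow_minus_one_power_card:
  assumes "finite E"
  shows "(\<Sum>B\<in>Pow E. (-1::'a::comm_ring_1) ^ card B) = (if E = {} then 1 else 0)"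
  using prod_diff_conv_sum[OF assms, of "\<lambda>_. 1::'a" "\<lambda>_. 1"] assms
  by (simp add: power_0_left)

lemma mobius_from_eqI:
  assumes L: "finite L"
    and out: "\<forall>X. X \<notin> L \<longrightarrow> m X = 0"
    and rec: "\<forall>X\<in>L. m X = (if X = V then 1 else - (\<Sum>Y\<in>{Y\<in>L. X \<subset> Y \<and> Y \<subseteq> V}. m Y))"
  shows "mobius_from L V = m"
  unfolding mobius_from_def
proof (rule the_equality)
  fix m' :: "'a set \<Rightarrow> int"
  assume m': "(\<forall>X. X \<notin> L \<longrightarrow> m' X = 0) \<and>
    (\<forall>X\<in>L. m' X = (if X = V then 1 else - (\<Sum>Y\<in>{Y\<in>L. X \<subset> Y \<and> Y \<subseteq> V}. m' Y)))"
  have "m' X = m X" if "X \<in> L" for X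
    using that
  proof (induction X rule: measure_induct_rule[where f = "\<lambda>X. card {Y\<in>L. X \<subset> Y}"])
    case (less X)
    have "m' Y = m Y" if "Y \<in> {Y\<in>L. X \<subset> Y \<and> Y \<subseteq> V}" for Y
    proof (rule less.IH)
      show "card {Z\<in>L. Y \<subset> Z} < card {Z\<in>L. X \<subset> Z}"
        using that L by (intro psubset_card_mono) auto
    qed (use that in auto)
    then have "sum m' {Y\<in>L. X \<subset> Y \<and> Y \<subseteq> V} = sum m {Y\<in>L. X \<subset> Y \<and> Y \<subseteq> V}"
      by (rule sum.cong[OF refl])
    moreover have "m' X = (if X = V then 1 else - sum m' {Y\<in>L. X \<subset> Y \<and> Y \<subseteq> V})"
      using m' less.prems by blast
    moreover have "m X = (if X = V then 1 else - sum m {Y\<in>L. X \<subset> Y \<and> Y \<subseteq> V})"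
      using rec less.prems by blast
    ultimately show ?case
      by simp
  qed
  then show "m' = m"
    using m' out by fastforce
qed (use out rec in blast)

definition inter_mobius :: "'a set set \<Rightarrow> 'a set \<Rightarrow> int" where
  "inter_mobius A X = (\<Sum>B\<in>{B\<in>Pow A. \<Inter>B = X}. (-1) ^ card B)"

lemma sum_inter_mobius_supsets:
  assumes "finite A"
  shows "(\<Sum>Y\<in>{Y\<in>Inter ` Pow A. X \<subseteq> Y}. inter_mobius A Y) = (if \<forall>H\<in>A. \<not> X \<subseteq> H then 1 else 0)"
proof -
  have "(\<Sum>Y\<in>{Y\<in>Inter ` Pow A. X \<subseteq> Y}. inter_mobius A Y)
      = (\<Sum>Y\<in>{Y\<in>Inter ` Pow A. X \<subseteq> Y}. \<Sum>B\<in>{B\<in>{B\<in>Pow A. X \<subseteq> \<Inter>B}. \<Inter>B = Y}. (-1) ^ card B)"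
    unfolding inter_mobius_def by (intro sum.cong refl) blast
  also have "\<dots> = (\<Sum>B\<in>{B\<in>Pow A. X \<subseteq> \<Inter>B}. (-1) ^ card B)"
    using assms by (intro sum.group) auto
  also have "{B\<in>Pow A. X \<subseteq> \<Inter>B} = Pow {H\<in>A. X \<subseteq> H}"
    by auto
  finally show ?thesis
    using assms by (simp add: sum_Pow_minus_one_power_card)
qed

lemma inter_mobius_rec:
  assumes A: "finite A" "UNIV \<notin> A" and X: "X \<in> Inter ` Pow A"
  shows "inter_mobius A X
    = (if X = UNIV then 1 else - (\<Sum>Y\<in>{Y\<in>Inter ` Pow A. X \<subset> Y \<and> Y \<subseteq> UNIV}. inter_mobius A Y))"
proof -
  have "(\<forall>H\<in>A. \<not> X \<subseteq> H) \<longleftrightarrow> X = UNIV"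
  proof
    show "\<forall>H\<in>A. \<not> X \<subseteq> H \<Longrightarrow> X = UNIV"
      using X by auto
    show "X = UNIV \<Longrightarrow> \<forall>H\<in>A. \<not> X \<subseteq> H"
      using A(2) by (metis subset_UNIV subset_antisym)
  qed
  moreover have "{Y\<in>Inter ` Pow A. X \<subseteq> Y} = insert X {Y\<in>Inter ` Pow A. X \<subset> Y \<and> Y \<subseteq> UNIV}"
    using X by auto
  ultimately have "inter_mobius A X + (\<Sum>Y\<in>{Y\<in>Inter ` Pow A. X \<subset> Y \<and> Y \<subseteq> UNIV}. inter_mobius A Y)
      = (if X = UNIV then 1 else 0)"
    using sum_inter_mobius_supsets[OF A(1), of X] A(1) by simp
  moreover have "X = UNIV \<Longrightarrow> {Y\<in>Inter ` Pow A. X \<subset> Y \<and> Y \<subseteq> UNIV} = {}"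
    by auto
  ultimately show ?thesis
    by (auto split: if_splits)
qed

theorem mobius_from_Inter_Pow:
  assumes "finite A" "UNIV \<notin> A"
  shows "mobius_from (Inter ` Pow A) UNIV = inter_mobius A"
proof (rule mobius_from_eqI)
  show "\<forall>X. X \<notin> Inter ` Pow A \<longrightarrow> inter_mobius A X = 0"
    by (auto simp: inter_mobius_def intro!: sum.neutral)
  show "\<forall>X\<in>Inter ` Pow A. inter_mobius A X
    = (if X = UNIV then 1 else - (\<Sum>Y\<in>{Y\<in>Inter ` Pow A. X \<subset> Y \<and> Y \<subseteq> UNIV}. inter_mobius A Y))"
    using inter_mobius_rec[OF assms] by blast
qed (use assms in simp)

lemma int_lattice_eq: "int_lattice A = Inter ` Pow A"
  unfolding int_lattice_def by auto

lemma coeff_char_poly: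
  assumes "finite A" "UNIV \<notin> A"
  shows "coeff (char_poly A) k = of_int (\<Sum>X\<in>{X\<in>int_lattice A. dim X = k}. inter_mobius A X)"
  unfolding char_poly_def int_lattice_eq mobius_from_Inter_Pow[OF assms] coeff_sum coeff_monom
  using assms(1) by (subst sum.inter_filter[symmetric]) (auto simp: of_int_sum)

lemma poly_char_poly:
  assumes "finite A" "UNIV \<notin> A"
  shows "poly (char_poly A) x = (\<Sum>B\<in>Pow A. (-1) ^ card B * x ^ dim (\<Inter>B))"
proof -
  have "poly (char_poly A) x = (\<Sum>X\<in>Inter ` Pow A. \<Sum>B\<in>{B\<in>Pow A. \<Inter>B = X}. (-1) ^ card B * x ^ dim (\<Inter>B))"
    unfolding char_poly_def int_lattice_eq mobius_from_Inter_Pow[OF assms] poly_sum poly_monom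
      inter_mobius_def of_int_sum sum_distrib_right
    by (intro sum.cong refl) auto
  also have "\<dots> = (\<Sum>B\<in>Pow A. (-1) ^ card B * x ^ dim (\<Inter>B))"
    using assms(1) by (intro sum.group) auto
  finally show ?thesis .
qed

section \<open>Quartics with root one and real-rooted cubics\<close>

lemma poly_eq_coeffs_upto_4:
  fixes p :: "'a::zero poly"
  assumes "degree p \<le> 4"
  shows "p = [:coeff p 0, coeff p 1, coeff p 2, coeff p 3, coeff p 4:]"
proof (rule poly_eqI)
  fix k
  show "coeff p k = coeff [:coeff p 0, coeff p 1, coeff p 2, coeff p 3, coeff p 4:] k"
  proof (cases "k \<le> 4")
    case True
    then consider "k = 0" | "k = 1" | "k = 2" | "k = 3" | "k = 4"
      by linarith
    then show ?thesis
      by cases (simp_all add: numeral_eq_Suc)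
  next
    case False
    then have k: "k = Suc (Suc (Suc (Suc (Suc (k - 5)))))"
      by linarith
    have "coeff p k = 0"
      using False assms by (intro coeff_eq_0) simp
    moreover have "coeff [:coeff p 0, coeff p 1, coeff p 2, coeff p 3, coeff p 4:] k = 0"
      by (subst k) (simp only: coeff_pCons_Suc coeff_0)
    ultimately show ?thesis
      by simp
  qed
qed

lemma quartic_eq_linear_times_cubic:
  fixes p :: "real poly"
  assumes "degree p \<le> 4" "coeff p 4 = 1" "coeff p 3 = - n" "coeff p 2 = h"
    and "poly p 1 = 0" "poly p (-1) = 2 * f"
  shows "p = [:-1, 1:] * [:h + 1 - f, h + 1 - n, 1 - n, 1:]"
proof -
  have p: "p = [:coeff p 0, coeff p 1, h, - n, 1:]"
    using poly_eq_coeffs_upto_4[OF assms(1)] assms(2-4) by simp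
  have "poly p 1 = coeff p 0 + coeff p 1 + h - n + 1"
    by (subst p) simp
  moreover have "poly p (-1) = coeff p 0 - coeff p 1 + h + n + 1"
    by (subst p) simp
  ultimately have "coeff p 0 = f - h - 1" "coeff p 1 = n - f"
    using assms(5,6) by linarith+
  then show ?thesis
    by (subst p) (simp add: algebra_simps)
qed

definition cubic_discriminant :: "real \<Rightarrow> real \<Rightarrow> real \<Rightarrow> real" where
  "cubic_discriminant b c d = b\<^sup>2 * c\<^sup>2 - 4 * c ^ 3 - 4 * b ^ 3 * d - 27 * d\<^sup>2 + 18 * b * c * d"

lemma monic_cubic_real_root:
  fixes b c d :: real
  obtains r where "poly [:d, c, b, 1:] r = 0"
proof -
  obtain m where m: "\<forall>x\<ge>m. 1 \<le> poly [:d, c, b, 1:] x"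
    using poly_pinfty_gt_lc[of "[:d, c, b, 1:]"] by auto
  obtain m' where m': "\<forall>x\<ge>m'. 1 \<le> poly [:- d, c, - b, 1:] x"
    using poly_pinfty_gt_lc[of "[:- d, c, - b, 1:]"] by auto
  define M where "M = \<bar>m\<bar> + \<bar>m'\<bar> + 1"
  have M: "m \<le> M" "m' \<le> M" "- M < M"
    by (simp_all add: M_def add_pos_nonneg)
  have "poly [:d, c, b, 1:] (- M) = - poly [:- d, c, - b, 1:] M"
    by (simp add: algebra_simps)
  then have "poly [:d, c, b, 1:] (- M) < 0" "0 < poly [:d, c, b, 1:] M"
    using m m' M by force+
  then show ?thesis
    using poly_IVT_pos[OF M(3)] that by blast
qed

lemma real_roots_monic_quadratic_iff:
  fixes b c :: real
  shows "(\<forall>z::complex. z\<^sup>2 + of_real b * z + of_real c = 0 \<longrightarrow> z \<in> \<real>) \<longleftrightarrow> 0 \<le> b\<^sup>2 - 4 * c"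
proof
  assume real: "\<forall>z::complex. z\<^sup>2 + of_real b * z + of_real c = 0 \<longrightarrow> z \<in> \<real>"
  show "0 \<le> b\<^sup>2 - 4 * c"
  proof (rule ccontr)
    assume "\<not> 0 \<le> b\<^sup>2 - 4 * c"
    then have s: "sqrt (4 * c - b\<^sup>2) > 0" "sqrt (4 * c - b\<^sup>2) ^ 2 = 4 * c - b\<^sup>2"
      by simp_all
    define z where "z = Complex (- b / 2) (sqrt (4 * c - b\<^sup>2) / 2)"
    have "z\<^sup>2 + of_real b * z + of_real c = 0"
      using s(2) by (simp add: z_def complex_eq_iff power2_eq_square field_simps)
    then show False
      using real s(1) by (auto simp: z_def complex_is_Real_iff)
  qed
next
  assume D: "0 \<le> b\<^sup>2 - 4 * c"
  define r\<^sub>1 r\<^sub>2 where "r\<^sub>1 = (- b + sqrt (b\<^sup>2 - 4 * c)) / 2" and "r\<^sub>2 = (- b - sqrt (b\<^sup>2 - 4 * c)) / 2"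
  have "sqrt (b\<^sup>2 - 4 * c) ^ 2 = b\<^sup>2 - 4 * c"
    using D by simp
  then have b: "b = - r\<^sub>1 - r\<^sub>2" and c: "c = r\<^sub>1 * r\<^sub>2"
    by (simp_all add: r\<^sub>1_def r\<^sub>2_def field_simps power2_eq_square)
  have "z\<^sup>2 + of_real b * z + of_real c = (z - of_real r\<^sub>1) * (z - of_real r\<^sub>2)" for z :: complex
    unfolding b c by (simp add: algebra_simps power2_eq_square)
  then show "\<forall>z::complex. z\<^sup>2 + of_real b * z + of_real c = 0 \<longrightarrow> z \<in> \<real>"
    by auto
qed

lemma real_roots_monic_cubic_iff:
  fixes b c d :: real
  shows "(\<forall>z::complex. poly (map_poly of_real [:d, c, b, 1:]) z = 0 \<longrightarrow> z \<in> \<real>)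
    \<longleftrightarrow> 0 \<le> cubic_discriminant b c d"
proof -
  obtain r where r: "poly [:d, c, b, 1:] r = 0"
    by (rule monic_cubic_real_root)
  \<comment> \<open>split off the real root: the cubic is (x - r) (x^2 + \<beta> x + \<gamma>)\<close>
  define \<beta> \<gamma> where "\<beta> = b + r" and "\<gamma> = c + r * (b + r)"
  have d: "d = - r * \<gamma>"
    using r by (simp add: \<gamma>_def algebra_simps power2_eq_square)
  have factor: "poly (map_poly of_real [:d, c, b, 1:]) z
      = (z - of_real r) * (z\<^sup>2 + of_real \<beta> * z + of_real \<gamma>)"
    for z :: complex
    by (simp add: d \<beta>_def \<gamma>_def map_poly_pCons algebra_simps power2_eq_square)
  define q where "q = r\<^sup>2 + \<beta> * r + \<gamma>"
  have disc: "cubic_discriminant b c d = q\<^sup>2 * (\<beta>\<^sup>2 - 4 * \<gamma>)"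
    by (simp add: cubic_discriminant_def d q_def \<beta>_def \<gamma>_def algebra_simps power2_eq_square power3_eq_cube)
  \<comment> \<open>if r is also a root of the quadratic factor, its discriminant is a square\<close>
  have "(2 * r + \<beta>)\<^sup>2 = 4 * q + (\<beta>\<^sup>2 - 4 * \<gamma>)"
    by (simp add: q_def algebra_simps power2_eq_square)
  then have "q = 0 \<Longrightarrow> 0 \<le> \<beta>\<^sup>2 - 4 * \<gamma>"
    by (metis add_0 mult_zero_right zero_le_power2)
  then have "0 \<le> q\<^sup>2 * (\<beta>\<^sup>2 - 4 * \<gamma>) \<longleftrightarrow> 0 \<le> \<beta>\<^sup>2 - 4 * \<gamma>"
    by (cases "q = 0") (auto simp: zero_le_mult_iff)
  then show ?thesis
    unfolding factor disc real_roots_monic_quadratic_iff[symmetric] by auto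
qed

lemma real_roots_linear_times_cubic_iff:
  fixes b c d :: real
  shows "(\<forall>z::complex. poly (map_poly of_real ([:-1, 1:] * [:d, c, b, 1:])) z = 0 \<longrightarrow> z \<in> \<real>)
    \<longleftrightarrow> 0 \<le> cubic_discriminant b c d"
proof -
  have "poly (map_poly of_real ([:-1, 1:] * [:d, c, b, 1:])) z
      = (z - 1) * poly (map_poly of_real [:d, c, b, 1:]) z"
    for z :: complex
    by (simp add: map_poly_pCons algebra_simps)
  then show ?thesis
    using real_roots_monic_cubic_iff[of d c b] by auto
qed

lemma power2_le_four_cube_iff:
  fixes u D :: real
  shows "u\<^sup>2 \<le> 4 * D ^ 3 \<longleftrightarrow> 0 \<le> D \<and> \<bar>u\<bar> \<le> 2 * sqrt (D ^ 3)"
proof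
  assume h: "u\<^sup>2 \<le> 4 * D ^ 3"
  then have "0 \<le> D ^ 3"
    using zero_le_power2[of u] by linarith
  then have "0 \<le> D"
    by (simp add: zero_le_odd_power)
  moreover have "\<bar>u\<bar> \<le> sqrt (4 * D ^ 3)"
    using real_sqrt_le_mono[OF h] by simp
  ultimately show "0 \<le> D \<and> \<bar>u\<bar> \<le> 2 * sqrt (D ^ 3)"
    by (simp add: real_sqrt_mult)
next
  assume h: "0 \<le> D \<and> \<bar>u\<bar> \<le> 2 * sqrt (D ^ 3)"
  then have "\<bar>u\<bar>\<^sup>2 \<le> (2 * sqrt (D ^ 3))\<^sup>2"
    by (intro power_mono) auto
  then show "u\<^sup>2 \<le> 4 * D ^ 3"
    using h by (simp add: power_mult_distrib)
qed

definition line_excess_bound :: "nat \<Rightarrow> int" where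
  "line_excess_bound n = \<lfloor>(real n + 2) * (real n - 1) / 3\<rfloor>"

definition chamber_upper_bound :: "nat \<Rightarrow> nat \<Rightarrow> int" where
  "chamber_upper_bound n h = \<lfloor>((9 * real n + 18) * real h + 20 + 12 * real n
      + 2 * sqrt ((real n ^ 2 + real n - 2 - 3 * real h) ^ 3) - 2 * real n ^ 3 - 3 * real n ^ 2) / 27\<rfloor>"

definition chamber_lower_bound :: "nat \<Rightarrow> nat \<Rightarrow> int" where
  "chamber_lower_bound n h = \<lceil>((9 * real n + 18) * real h + 20 + 12 * real n
      - 2 * sqrt ((real n ^ 2 + real n - 2 - 3 * real h) ^ 3) - 2 * real n ^ 3 - 3 * real n ^ 2) / 27\<rceil>"

lemma cubic_discriminant_nonneg_iff_bounds:
  fixes n h f :: nat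
  shows "0 \<le> cubic_discriminant (1 - real n) (real h + 1 - real n) (real h + 1 - real f)
    \<longleftrightarrow> int h \<le> line_excess_bound n \<and> int f \<le> chamber_upper_bound n h \<and> chamber_lower_bound n h \<le> int f"
proof -
  define D where "D = real n ^ 2 + real n - 2 - 3 * real h"
  define u where
    "u = (9 * real n + 18) * real h + 20 + 12 * real n - 2 * real n ^ 3 - 3 * real n ^ 2 - 27 * real f"
  have "27 * cubic_discriminant (1 - real n) (real h + 1 - real n) (real h + 1 - real f)
      = 4 * D ^ 3 - u\<^sup>2"
    by (simp add: cubic_discriminant_def D_def u_def algebra_simps power2_eq_square power3_eq_cube)
  then have "0 \<le> cubic_discriminant (1 - real n) (real h + 1 - real n) (real h + 1 - real f)
      \<longleftrightarrow> u\<^sup>2 \<le> 4 * D ^ 3"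
    by linarith
  moreover have "int h \<le> line_excess_bound n \<longleftrightarrow> 0 \<le> D"
    unfolding line_excess_bound_def le_floor_iff D_def by (simp add: field_simps power2_eq_square)
  moreover have "int f \<le> chamber_upper_bound n h \<longleftrightarrow> - (2 * sqrt (D ^ 3)) \<le> u"
    unfolding chamber_upper_bound_def le_floor_iff D_def u_def by (simp add: field_simps)
  moreover have "chamber_lower_bound n h \<le> int f \<longleftrightarrow> u \<le> 2 * sqrt (D ^ 3)"
    unfolding chamber_lower_bound_def ceiling_le_iff D_def u_def by (simp add: field_simps)
  ultimately show ?thesis
    unfolding power2_le_four_cube_iff by linarith
qed

section \<open>Central arrangements of hyperplanes in four-space\<close>

lemma card_image_eq_card_image:
  assumes same: "\<And>x y. x \<in> T \<Longrightarrow> y \<in> T \<Longrightarrow> f x = f y \<longleftrightarrow> g x = g y"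
  shows "card (f ` T) = card (g ` T)"
proof -
  define h where "h = f \<circ> inv_into T g"
  have hg: "h (g x) = f x" if "x \<in> T" for x
  proof -
    have "inv_into T g (g x) \<in> T" "g (inv_into T g (g x)) = g x"
      using that by (simp_all add: inv_into_into f_inv_into_f)
    then show ?thesis
      unfolding h_def using same[of "inv_into T g (g x)" x] that by simp
  qed
  have "f ` T = h ` g ` T"
    unfolding image_image using hg by simp
  moreover have "inj_on h (g ` T)"
  proof (rule inj_onI)
    fix s t assume "s \<in> g ` T" "t \<in> g ` T" "h s = h t"
    then show "s = t"
      using hg same by auto
  qed
  ultimately show ?thesis
    by (simp add: card_image)
qed

definition line_excess :: "(real^4) set set \<Rightarrow> nat" where
  "line_excess A = (\<Sum>i\<in>{2..card A}. (i - 1) * h_count A i)"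

locale arrangement =
  fixes A :: "(real^4) set set"
  assumes is_arrangement: "is_arrangement A"
begin

definition normal :: "(real^4) set \<Rightarrow> real^4" where
  "normal H = (SOME a. a \<noteq> 0 \<and> H = {x. a \<bullet> x = 0})"

lemma normal:
  assumes "H \<in> A"
  shows "normal H \<noteq> 0 \<and> H = {x. normal H \<bullet> x = 0}"
proof -
  have "\<exists>a. a \<noteq> 0 \<and> H = {x. a \<bullet> x = 0}"
    using is_arrangement assms unfolding is_arrangement_def by blast
  then show ?thesis
    unfolding normal_def by (rule someI_ex)
qed

lemma finite_arrangement: "finite A"
  using is_arrangement by (simp add: is_arrangement_def)

lemma arrangement_nonempty: "A \<noteq> {}"
proof
  assume "A = {}"
  then have "(UNIV :: (real^4) set) = {0}"
    using is_arrangement by (simp add: is_arrangement_def)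
  then show False
    by (metis UNIV_I axis_nth singletonD zero_index zero_neq_one)
qed

lemma subspace_member: "H \<in> A \<Longrightarrow> subspace H"
  using normal[of H] subspace_hyperplane[of "normal H"] by simp

lemma dim_member: "H \<in> A \<Longrightarrow> dim H = 3"
  using normal[of H] dim_hyperplane[of "normal H"] by simp

lemma UNIV_not_member: "UNIV \<notin> A"
  using dim_member by force

lemma Inter_eq_kernels: "B \<subseteq> A \<Longrightarrow> \<Inter>B = {x. \<forall>K\<in>B. normal K \<bullet> x = 0}"
  using normal by blast

lemma complement_eq_generic_points: "- \<Union>A = {x. \<forall>H\<in>A. normal H \<bullet> x \<noteq> 0}"
  using normal by blast

lemma chambers_eq_sign_cells:
  "chambers A = (\<lambda>x. sign_cell normal A x \<union> sign_cell normal A (- x)) ` {x. \<forall>H\<in>A. normal H \<bullet> x \<noteq> 0}"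
  unfolding chambers_def complement_eq_generic_points components_def image_image
  by (intro image_cong refl) (simp add: connected_component_eq_sign_cell sign_cell_uminus)

text \<open>Each chamber consists of two antipodal sign cells, exactly one of which lies on the positive
  side of a fixed hyperplane \<open>H\<^sub>0\<close>.\<close>

lemma f3_eq_card_region_signs_halfspace:
  assumes H\<^sub>0: "H\<^sub>0 \<in> A"
  shows "f3 A = card (region_signs normal A {x. 0 < normal H\<^sub>0 \<bullet> x})"
proof -
  define T where "T = {x\<in>{x. 0 < normal H\<^sub>0 \<bullet> x}. \<forall>K\<in>A. normal K \<bullet> x \<noteq> 0}"
  let ?cell = "sign_cell normal A" and ?sv = "sign_vector normal A"
  have generic: "{x. \<forall>H\<in>A. normal H \<bullet> x \<noteq> 0} = T \<union> uminus ` T"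
  proof
    show "{x. \<forall>H\<in>A. normal H \<bullet> x \<noteq> 0} \<subseteq> T \<union> uminus ` T"
    proof
      fix x assume x: "x \<in> {x. \<forall>H\<in>A. normal H \<bullet> x \<noteq> 0}"
      then have "normal H\<^sub>0 \<bullet> x \<noteq> 0"
        using H\<^sub>0 by simp
      then show "x \<in> T \<union> uminus ` T"
        using x by (cases "0 < normal H\<^sub>0 \<bullet> x") (auto simp: T_def intro!: rev_image_eqI[of "- x"])
    qed
  qed (auto simp: T_def)
  have pos: "?sv x H\<^sub>0 = 1" if "x \<in> T" for x
    using that H\<^sub>0 by (simp add: T_def sign_vector_def)
  have chambers: "chambers A = (\<lambda>x. ?cell x \<union> ?cell (- x)) ` T"
    unfolding chambers_eq_sign_cells generic image_Un image_image by (auto simp: Un_commute)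
  have same: "?cell x \<union> ?cell (- x) = ?cell y \<union> ?cell (- y) \<longleftrightarrow> ?sv x = ?sv y"
    if "x \<in> T" "y \<in> T" for x y
  proof
    assume eq: "?cell x \<union> ?cell (- x) = ?cell y \<union> ?cell (- y)"
    have "x \<in> ?cell x"
      using that by (simp add: T_def mem_sign_cell_iff)
    moreover have "x \<notin> ?cell (- y)"
    proof
      assume "x \<in> ?cell (- y)"
      then have "?sv x H\<^sub>0 = - ?sv y H\<^sub>0"
        using that by (simp add: T_def mem_sign_cell_iff sign_vector_uminus)
      then show False
        using pos that by simp
    qed
    ultimately show "?sv x = ?sv y"
      using eq that by (auto simp: T_def mem_sign_cell_iff)
  next
    assume "?sv x = ?sv y"
    then have "?cell x = ?cell y"
      using that sign_cell_eq_iff[of A normal x y] by (simp add: T_def)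
    then show "?cell x \<union> ?cell (- x) = ?cell y \<union> ?cell (- y)"
      by (simp add: sign_cell_uminus)
  qed
  show ?thesis
    unfolding f3_def chambers region_signs_def T_def[symmetric]
    by (rule card_image_eq_card_image[OF same])
qed

lemma card_chambers: "2 * f3 A = card (region_signs normal A UNIV)"
proof -
  obtain H\<^sub>0 where "H\<^sub>0 \<in> A"
    using arrangement_nonempty by blast
  then show ?thesis
    using card_region_signs_halfspace[OF finite_arrangement] f3_eq_card_region_signs_halfspace by metis
qed

lemma subspace_lattice: "X \<in> int_lattice A \<Longrightarrow> subspace X"
  unfolding int_lattice_eq using subspace_member by (auto intro!: subspace_Inter)

lemma UNIV_in_lattice: "UNIV \<in> int_lattice A"
  unfolding int_lattice_eq by (auto intro!: image_eqI[of _ _ "{}"])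

lemma member_in_lattice: "H \<in> A \<Longrightarrow> H \<in> int_lattice A"
  unfolding int_lattice_eq by (auto intro!: image_eqI[of _ _ "{H}"])

lemma dim_lattice_less:
  assumes "X \<in> int_lattice A" "Y \<in> int_lattice A" "X \<subset> Y"
  shows "dim X < dim Y"
proof -
  have "dim X \<le> dim Y"
    using assms(3) by (simp add: dim_subset)
  moreover have "dim X \<noteq> dim Y"
    using subspace_dim_equal[of X Y] subspace_lattice assms by auto
  ultimately show ?thesis
    by simp
qed

lemma dim_Int_members:
  assumes H: "H \<in> A" and K: "K \<in> A" "H \<noteq> K"
  shows "dim (H \<inter> K) = 2"
proof -
  have "\<not> H \<subseteq> K"
    using subspace_dim_equal[OF subspace_member[OF H] subspace_member[OF K(1)]] dim_member H K by auto
  then obtain v where v: "v \<in> H" "normal K \<bullet> v \<noteq> 0"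
    using normal[OF K(1)] by blast
  have "H \<inter> K = H \<inter> {x. normal K \<bullet> x = 0}"
    using normal[OF K(1)] by blast
  then show ?thesis
    using dim_Int_hyperplane[OF subspace_member[OF H] v] dim_member[OF H] by simp
qed

lemma lattice_cases:
  assumes "X \<in> int_lattice A"
  shows "X = UNIV \<or> X \<in> A \<or> dim X \<le> 2"
proof -
  obtain B where B: "B \<subseteq> A" "X = \<Inter>B"
    using assms unfolding int_lattice_eq by blast
  consider "B = {}" | H where "B = {H}" | H K where "H \<in> B" "K \<in> B" "H \<noteq> K"
    by blast
  then show ?thesis
  proof cases
    case (3 H K)
    then have "dim X \<le> dim (H \<inter> K)"
      using B by (intro dim_subset) blast
    moreover have "dim (H \<inter> K) = 2"
      using 3 B by (intro dim_Int_members) auto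
    ultimately show ?thesis
      by simp
  qed (use B in auto)
qed

lemma dim_lattice_eq_4_iff: "X \<in> int_lattice A \<Longrightarrow> dim X = 4 \<longleftrightarrow> X = UNIV"
  using lattice_cases dim_member by fastforce

lemma dim_lattice_eq_3_iff: "X \<in> int_lattice A \<Longrightarrow> dim X = 3 \<longleftrightarrow> X \<in> A"
  using lattice_cases dim_member by fastforce

lemma inter_mobius_lattice_rec:
  assumes "X \<in> int_lattice A" "X \<noteq> UNIV"
  shows "inter_mobius A X = - (\<Sum>Y\<in>{Y\<in>int_lattice A. X \<subset> Y}. inter_mobius A Y)"
  using inter_mobius_rec[OF finite_arrangement UNIV_not_member, of X] assms
  unfolding int_lattice_eq by simp

lemma inter_mobius_UNIV: "inter_mobius A UNIV = 1"
  using inter_mobius_rec[OF finite_arrangement UNIV_not_member, of UNIV] UNIV_in_lattice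
  unfolding int_lattice_eq by simp

lemma inter_mobius_member:
  assumes H: "H \<in> A"
  shows "inter_mobius A H = -1"
proof -
  have "{Y\<in>int_lattice A. H \<subset> Y} = {UNIV}"
  proof
    show "{Y\<in>int_lattice A. H \<subset> Y} \<subseteq> {UNIV}"
    proof
      fix Y assume Y: "Y \<in> {Y\<in>int_lattice A. H \<subset> Y}"
      then have "3 < dim Y"
        using dim_lattice_less[OF member_in_lattice[OF H]] dim_member[OF H] by auto
      moreover have "dim Y \<le> 4"
        using dim_subset_UNIV[of Y] by simp
      ultimately have "dim Y = 4"
        by simp
      then show "Y \<in> {UNIV}"
        using dim_lattice_eq_4_iff Y by simp
    qed
    show "{UNIV} \<subseteq> {Y\<in>int_lattice A. H \<subset> Y}"
      using UNIV_in_lattice UNIV_not_member H by auto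
  qed
  then show ?thesis
    using inter_mobius_lattice_rec[OF member_in_lattice[OF H]] UNIV_not_member H inter_mobius_UNIV by auto
qed

lemma inter_mobius_line:
  assumes X: "X \<in> lines A"
  shows "inter_mobius A X = int (weight A X) - 1"
proof -
  have XL: "X \<in> int_lattice A" and dimX: "dim X = 2"
    using X by (auto simp: lines_def)
  have "{Y\<in>int_lattice A. X \<subset> Y} = insert UNIV {H\<in>A. X \<subseteq> H}"
  proof
    show "{Y\<in>int_lattice A. X \<subset> Y} \<subseteq> insert UNIV {H\<in>A. X \<subseteq> H}"
    proof
      fix Y assume Y: "Y \<in> {Y\<in>int_lattice A. X \<subset> Y}"
      then have "2 < dim Y"
        using dim_lattice_less[OF XL] dimX by auto
      moreover have "dim Y \<le> 4"
        using dim_subset_UNIV[of Y] by simp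
      ultimately have "dim Y = 3 \<or> dim Y = 4"
        by linarith
      then show "Y \<in> insert UNIV {H\<in>A. X \<subseteq> H}"
        using dim_lattice_eq_3_iff dim_lattice_eq_4_iff Y by auto
    qed
    show "insert UNIV {H\<in>A. X \<subseteq> H} \<subseteq> {Y\<in>int_lattice A. X \<subset> Y}"
      using UNIV_in_lattice member_in_lattice dim_member dimX by fastforce
  qed
  moreover have "UNIV \<notin> {H\<in>A. X \<subseteq> H}"
    using UNIV_not_member by blast
  ultimately have "inter_mobius A X = - (1 + (\<Sum>H\<in>{H\<in>A. X \<subseteq> H}. inter_mobius A H))"
    using inter_mobius_lattice_rec[OF XL] dimX finite_arrangement inter_mobius_UNIV by auto
  also have "(\<Sum>H\<in>{H\<in>A. X \<subseteq> H}. inter_mobius A H) = - int (weight A X)"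
    by (simp add: inter_mobius_member weight_def)
  finally show ?thesis
    by simp
qed

lemma weight_line_bounds:
  assumes X: "X \<in> lines A"
  shows "2 \<le> weight A X" "weight A X \<le> card A"
proof -
  obtain B where B: "B \<subseteq> A" "X = \<Inter>B" and dimX: "dim X = 2"
    using X unfolding lines_def int_lattice_eq by auto
  have "finite B"
    using B(1) finite_arrangement finite_subset by blast
  then have "card B \<noteq> 0" "card B \<noteq> 1"
    using B dimX dim_member by (auto simp: card_1_singleton_iff)
  moreover have "card B \<le> weight A X"
    unfolding weight_def using B finite_arrangement by (intro card_mono) auto
  ultimately show "2 \<le> weight A X"
    by linarith
  show "weight A X \<le> card A"
    unfolding weight_def using finite_arrangement by (intro card_mono) auto
qed

lemma finite_lines: "finite (lines A)"
  using finite_arrangement by (simp add: lines_def int_lattice_eq)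

lemma sum_h_count:
  "(\<Sum>i\<in>{2..card A}. g i * h_count A i) = (\<Sum>X\<in>lines A. g (weight A X))"
proof -
  have "(\<Sum>i\<in>{2..card A}. g i * h_count A i)
      = (\<Sum>i\<in>{2..card A}. \<Sum>X\<in>{X\<in>lines A. weight A X = i}. g (weight A X))"
    by (simp add: h_count_def mult.commute)
  also have "\<dots> = (\<Sum>X\<in>lines A. g (weight A X))"
    using finite_lines weight_line_bounds by (intro sum.group) auto
  finally show ?thesis .
qed

lemma line_excess_eq: "line_excess A = (\<Sum>X\<in>lines A. weight A X - 1)"
  unfolding line_excess_def by (rule sum_h_count)

lemma sum_h_count_eq_card_lines: "(\<Sum>i\<in>{2..card A}. h_count A i) = card (lines A)"
  using sum_h_count[of "\<lambda>_. 1"] by simp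

lemma sum_restr_card: "(\<Sum>H\<in>A. restr_card A H) = (\<Sum>X\<in>lines A. weight A X)"
proof -
  have "(\<Sum>H\<in>A. restr_card A H) = (\<Sum>H\<in>A. \<Sum>X\<in>lines A. if X \<subseteq> H then 1 else 0)"
    unfolding restr_card_def using finite_lines by (simp add: sum.If_cases Int_def)
  also have "\<dots> = (\<Sum>X\<in>lines A. \<Sum>H\<in>A. if X \<subseteq> H then 1 else 0)"
    by (rule sum.swap)
  also have "\<dots> = (\<Sum>X\<in>lines A. weight A X)"
    unfolding weight_def using finite_arrangement by (simp add: sum.If_cases Int_def)
  finally show ?thesis .
qed

lemma coeff_char_poly_lattice:
  "coeff (char_poly A) k = of_int (\<Sum>X\<in>{X\<in>int_lattice A. dim X = k}. inter_mobius A X)"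
  by (rule coeff_char_poly[OF finite_arrangement UNIV_not_member])

lemma coeff_char_poly_4: "coeff (char_poly A) 4 = 1"
proof -
  have "{X\<in>int_lattice A. dim X = 4} = {UNIV}"
    using dim_lattice_eq_4_iff UNIV_in_lattice by auto
  then show ?thesis
    by (simp add: coeff_char_poly_lattice inter_mobius_UNIV)
qed

lemma coeff_char_poly_3: "coeff (char_poly A) 3 = - real (card A)"
proof -
  have "{X\<in>int_lattice A. dim X = 3} = A"
    using dim_lattice_eq_3_iff member_in_lattice by auto
  then show ?thesis
    by (simp add: coeff_char_poly_lattice inter_mobius_member)
qed

lemma int_line_excess: "int (line_excess A) = (\<Sum>X\<in>lines A. int (weight A X) - 1)"
proof -
  have "int (weight A X - 1) = int (weight A X) - 1" if "X \<in> lines A" for X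
    using weight_line_bounds(1)[OF that] by simp
  then show ?thesis
    unfolding line_excess_eq of_nat_sum by simp
qed

lemma coeff_char_poly_2: "coeff (char_poly A) 2 = real (line_excess A)"
proof -
  have "coeff (char_poly A) 2 = of_int (\<Sum>X\<in>lines A. int (weight A X) - 1)"
    unfolding coeff_char_poly_lattice lines_def[symmetric]
    by (simp add: inter_mobius_line)
  then show ?thesis
    by (simp flip: int_line_excess)
qed

lemma degree_char_poly: "degree (char_poly A) \<le> 4"
proof (rule degree_le)
  have empty: "{X\<in>int_lattice A. dim X = k} = {}" if "4 < k" for k
    using that dim_subset_UNIV[where 'a = "real^4"] by (auto simp: not_le[symmetric])
  show "\<forall>k>4. coeff (char_poly A) k = 0"
    by (simp add: coeff_char_poly_lattice empty)
qed

lemma poly_char_poly_one: "poly (char_poly A) 1 = 0"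
  using poly_char_poly[OF finite_arrangement UNIV_not_member, of 1] arrangement_nonempty
    sum_Pow_minus_one_power_card[OF finite_arrangement, where 'a = real]
  by simp

lemma poly_char_poly_minus_one: "poly (char_poly A) (-1) = 2 * real (f3 A)"
proof -
  have "poly (char_poly A) (-1) = of_int (alternating_flat_sum normal A UNIV)"
    unfolding poly_char_poly[OF finite_arrangement UNIV_not_member] alternating_flat_sum_def of_int_sum
    by (intro sum.cong refl) (simp add: Inter_eq_kernels power_add)
  also have "\<dots> = of_int (int (card (region_signs normal A UNIV)))"
    using card_region_signs[OF finite_arrangement subspace_UNIV, of normal] by simp
  finally show ?thesis
    using card_chambers by simp
qed

theorem char_poly_factorization:
  "char_poly A = [:-1, 1:] * [:real (line_excess A) + 1 - real (f3 A),
      real (line_excess A) + 1 - real (card A), 1 - real (card A), 1:]"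
  by (rule quartic_eq_linear_times_cubic) (simp_all add: degree_char_poly coeff_char_poly_4
      coeff_char_poly_3 coeff_char_poly_2 poly_char_poly_one poly_char_poly_minus_one)

theorem real_rooted_iff_bounds:
  "(\<forall>z::complex. poly (map_poly of_real (char_poly A)) z = 0 \<longrightarrow> z \<in> \<real>)
    \<longleftrightarrow> int (line_excess A) \<le> line_excess_bound (card A)
      \<and> int (f3 A) \<le> chamber_upper_bound (card A) (line_excess A)
      \<and> chamber_lower_bound (card A) (line_excess A) \<le> int (f3 A)"
  unfolding char_poly_factorization real_roots_linear_times_cubic_iff
  by (rule cubic_discriminant_nonneg_iff_bounds)

lemma line_excess_eq_restrictions:
  "int (line_excess A) = (\<Sum>H\<in>A. int (restr_card A H)) - int (\<Sum>i\<in>{2..card A}. h_count A i)"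
proof -
  have "int (line_excess A) = (\<Sum>X\<in>lines A. int (weight A X) - 1)"
    by (rule int_line_excess)
  also have "\<dots> = int (\<Sum>H\<in>A. restr_card A H) - int (card (lines A))"
    by (simp add: sum_subtractf sum_restr_card)
  finally show ?thesis
    by (simp add: sum_h_count_eq_card_lines)
qed

end

section \<open>The coordinate arrangement\<close>

definition coordinate_arrangement :: "(real^4) set set" where
  "coordinate_arrangement = range (\<lambda>j. {x. x $ j = 0})"

lemma inj_coordinate_hyperplane: "inj (\<lambda>j::4. {x::real^4. x $ j = 0})"
proof (rule injI)
  fix j k :: 4
  assume "{x::real^4. x $ j = 0} = {x. x $ k = 0}"
  then have "axis j 1 \<in> {x::real^4. x $ k = 0} \<longleftrightarrow> axis j (1::real) \<in> {x::real^4. x $ j = 0}"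
    by simp
  then show "j = k"
    by (auto simp: axis_def split: if_splits)
qed

lemma is_arrangement_coordinate_arrangement: "is_arrangement coordinate_arrangement"
  unfolding is_arrangement_def coordinate_arrangement_def
proof (intro conjI)
  show "\<forall>H\<in>range (\<lambda>j. {x::real^4. x $ j = 0}). \<exists>a. a \<noteq> 0 \<and> H = {x. a \<bullet> x = 0}"
    by (auto intro!: exI[of _ "axis _ 1"] simp: axis_eq_0_iff inner_axis')
  show "\<Inter>(range (\<lambda>j. {x::real^4. x $ j = 0})) = {0}"
    by (auto simp: vec_eq_iff)
qed simp

interpretation coordinate: arrangement coordinate_arrangement
  by (rule arrangement.intro[OF is_arrangement_coordinate_arrangement])

lemma card_coordinate_arrangement: "card coordinate_arrangement = 4"
  unfolding coordinate_arrangement_def using inj_coordinate_hyperplane by (simp add: card_image)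

lemma char_poly_coordinate_arrangement: "char_poly coordinate_arrangement = [:-1, 1:] ^ 4"
proof (rule poly_eq_poly_eq_iff[THEN iffD1, OF ext])
  fix t :: real
  let ?H = "\<lambda>j::4. {x::real^4. x $ j = 0}"
  have dim: "dim (\<Inter>(?H ` J)) = card (UNIV - J)" for J
  proof -
    have "\<Inter>(?H ` J) = {x. \<forall>i. i \<notin> UNIV - J \<longrightarrow> x $ i = 0}"
      by auto
    then show ?thesis
      using dim_substandard_cart[of "UNIV - J", where 'a = real] by (simp add: dim_vec_eq)
  qed
  have "Pow coordinate_arrangement = image ?H ` Pow UNIV"
  proof
    show "Pow coordinate_arrangement \<subseteq> image ?H ` Pow UNIV"
    proof
      fix B assume "B \<in> Pow coordinate_arrangement"
      then have "B = ?H ` {j. ?H j \<in> B}"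
        unfolding coordinate_arrangement_def by auto
      then show "B \<in> image ?H ` Pow UNIV"
        by blast
    qed
  qed (auto simp: coordinate_arrangement_def)
  moreover have "inj_on (image ?H) (Pow UNIV)"
    using inj_coordinate_hyperplane by (simp add: inj_on_def inj_image_eq_iff)
  ultimately have "poly (char_poly coordinate_arrangement) t
      = (\<Sum>J\<in>Pow UNIV. (-1) ^ card (?H ` J) * t ^ dim (\<Inter>(?H ` J)))"
    by (simp add: poly_char_poly[OF coordinate.finite_arrangement coordinate.UNIV_not_member] sum.reindex)
  also have "\<dots> = (\<Sum>J\<in>Pow (UNIV :: 4 set). (\<Prod>j\<in>J. -1) * (\<Prod>j\<in>UNIV - J. t))"
    using inj_coordinate_hyperplane by (simp add: dim card_image inj_on_subset)
  also have "\<dots> = (\<Prod>j\<in>(UNIV :: 4 set). -1 + t)"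
    by (rule prod_add[symmetric]) simp
  finally show "poly (char_poly coordinate_arrangement) t = poly ([:-1, 1:] ^ 4) t"
    by simp
qed

lemma coordinate_arrangement_counts:
  "line_excess coordinate_arrangement = 6" "f3 coordinate_arrangement = 8"
proof -
  have "[:-1, 1:] * [:real (line_excess coordinate_arrangement) + 1 - real (f3 coordinate_arrangement),
      real (line_excess coordinate_arrangement) - 3, -3, 1:] = [:-1, 1:] * [:-1, 3, -3, 1::real:]"
    using coordinate.char_poly_factorization
    by (simp add: char_poly_coordinate_arrangement card_coordinate_arrangement numeral_eq_Suc
        algebra_simps)
  then have "real (line_excess coordinate_arrangement) + 1 - real (f3 coordinate_arrangement) = -1"
    "real (line_excess coordinate_arrangement) - 3 = 3"
    by simp_all
  then show "line_excess coordinate_arrangement = 6" "f3 coordinate_arrangement = 8"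
    by linarith+
qed

lemma coordinate_arrangement_attains_bounds:
  "int (line_excess coordinate_arrangement) = line_excess_bound (card coordinate_arrangement)
   \<and> int (f3 coordinate_arrangement)
       = chamber_upper_bound (card coordinate_arrangement) (line_excess coordinate_arrangement)
   \<and> int (f3 coordinate_arrangement)
       = chamber_lower_bound (card coordinate_arrangement) (line_excess coordinate_arrangement)"
  by (simp add: coordinate_arrangement_counts card_coordinate_arrangement line_excess_bound_def
      chamber_upper_bound_def chamber_lower_bound_def)

theorem theorem1:
  fixes A :: "(real^4) set set" and n h g1 :: nat
  assumes arr: "is_arrangement A"
    and n_def: "n = card A"
    and h_def: "h = (\<Sum>i\<in>{2..n}. (i - 1) * h_count A i)"
    and g1_def: "g1 = (\<Sum>i\<in>{2..n}. h_count A i)"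
  shows
   "char_poly A = [:-1, 1:] *
        [: real h + 1 - real (f3 A), real h + 1 - real n, 1 - real n, 1 :]
    \<and>
    ((\<forall>z::complex. poly (map_poly complex_of_real (char_poly A)) z = 0 \<longrightarrow> z \<in> \<real>)
     \<longleftrightarrow>
      ((int h = (\<Sum>H\<in>A. int (restr_card A H)) - int g1
        \<and> int h \<le> \<lfloor>(real n + 2) * (real n - 1) / 3\<rfloor>)
       \<and> int (f3 A) \<le> \<lfloor>((9 * real n + 18) * real h + 20 + 12 * real n
              + 2 * sqrt ((real n ^ 2 + real n - 2 - 3 * real h) ^ 3)
              - 2 * real n ^ 3 - 3 * real n ^ 2) / 27\<rfloor>
       \<and> int (f3 A) \<ge> \<lceil>((9 * real n + 18) * real h + 20 + 12 * real n
              - 2 * sqrt ((real n ^ 2 + real n - 2 - 3 * real h) ^ 3)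
              - 2 * real n ^ 3 - 3 * real n ^ 2) / 27\<rceil>))
    \<and>
    (\<exists>B :: (real^4) set set. is_arrangement B \<and>
       (let m = card B; k = (\<Sum>i\<in>{2..m}. (i - 1) * h_count B i) in
         int k = \<lfloor>(real m + 2) * (real m - 1) / 3\<rfloor>
         \<and> int (f3 B) = \<lfloor>((9 * real m + 18) * real k + 20 + 12 * real m
              + 2 * sqrt ((real m ^ 2 + real m - 2 - 3 * real k) ^ 3)
              - 2 * real m ^ 3 - 3 * real m ^ 2) / 27\<rfloor>
         \<and> int (f3 B) = \<lceil>((9 * real m + 18) * real k + 20 + 12 * real m
              - 2 * sqrt ((real m ^ 2 + real m - 2 - 3 * real k) ^ 3)
              - 2 * real m ^ 3 - 3 * real m ^ 2) / 27\<rceil>))"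
proof -
  interpret arrangement A
    by (rule arrangement.intro[OF arr])
  show ?thesis
    unfolding n_def h_def g1_def Let_def line_excess_def[symmetric] line_excess_bound_def[symmetric]
      chamber_upper_bound_def[symmetric] chamber_lower_bound_def[symmetric]
    using char_poly_factorization real_rooted_iff_bounds line_excess_eq_restrictions
      is_arrangement_coordinate_arrangement coordinate_arrangement_attains_bounds
    by blast
qed

end
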